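(* For $k\geq 3$ and $r\geq 2$, $$\Delta^{M(k;r)}(k;r)\leq \Delta^{M(k-1;r)}(k-1;r)+M(k;r-1)-1.$$
   Context: A sequence of positive integers $w_1<\dots<w_n$ is an ascending wave if $w_{i+1}-w_i \geq w_i-w_{i-1}$ for $2\le i\le n-1$. $AW(k;r)$ is the least $N$ such that every $r$-coloring of $\{1,\dots,N\}$ contains a $k$-term monochromatic ascending wave. For $k\ge 2$ and $M\ge AW(k;r)$: for an $r$-coloring $\psi$ of $\{1,\dots,M\}$, $\delta_k(\psi)$ is the minimum of $w_k-w_{k-1}$ over all monochromatic $k$-term ascending waves $(w_1,\dots,w_k)$ under $\psi$, and $\Delta^M(k;r)$ is the maximum of $\delta_k(\psi)$ over all $r$-colorings $\psi$ of $\{1,\dots,M\}$. The integers $M(k;r)$ are defined by $M(k;1)=k$, $M(1;r)=1$, $M(2;r)=r+1$, and for $k\ge3$, $r\ge2$, $M(k;r)=M(k-1;r)+\Delta^{M(k-1;r)}(k-1;r)+M(k;r-1)-1$; one has $M(k;r)\ge AW(k;r)$ so these quantities are defined. *)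

theory Defs
  imports Main
begin

definition ascending_wave :: "(nat \<Rightarrow> nat) \<Rightarrow> nat \<Rightarrow> bool" where
  "ascending_wave w n \<longleftrightarrow>
     (\<forall>i\<in>{1..n}. 1 \<le> w i) \<and>
     (\<forall>i\<in>{1..<n}. w i < w (Suc i)) \<and>
     (\<forall>i\<in>{2..n-1}. w (Suc i) - w i \<ge> w i - w (i - 1))"

definition coloring :: "nat \<Rightarrow> nat \<Rightarrow> (nat \<Rightarrow> nat) \<Rightarrow> bool" where
  "coloring r N psi \<longleftrightarrow> (\<forall>i\<in>{1..N}. psi i < r)"

definition mono_wave :: "(nat \<Rightarrow> nat) \<Rightarrow> nat \<Rightarrow> nat \<Rightarrow> (nat \<Rightarrow> nat) \<Rightarrow> bool" where
  "mono_wave psi N k w \<longleftrightarrow> ascending_wave w k \<and> (\<forall>i\<in>{1..k}. w i \<le> N)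
     \<and> (\<forall>i\<in>{1..k}. psi (w i) = psi (w 1))"

definition AW :: "nat \<Rightarrow> nat \<Rightarrow> nat" where
  "AW k r = (LEAST N. \<forall>psi. coloring r N psi \<longrightarrow> (\<exists>w. mono_wave psi N k w))"

definition delta :: "nat \<Rightarrow> nat \<Rightarrow> (nat \<Rightarrow> nat) \<Rightarrow> nat" where
  "delta k M psi = Min {w k - w (k - 1) | w. mono_wave psi M k w}"

definition Delta :: "nat \<Rightarrow> nat \<Rightarrow> nat \<Rightarrow> nat" where
  "Delta M k r = Max {delta k M psi | psi. coloring r M psi}"

text \<open>M(k;r); values for k = 0 or r = 0 are irrelevant conventions.\<close>
function Mf :: "nat \<Rightarrow> nat \<Rightarrow> nat" where
  "Mf k r = (if k = 0 \<or> r = 0 then 0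
             else if r = 1 then k
             else if k = 1 then 1
             else if k = 2 then r + 1
             else Mf (k - 1) r + Delta (Mf (k - 1) r) (k - 1) r + Mf k (r - 1) - 1)"
  by pat_completeness auto
termination by (relation "measure (\<lambda>(k, r). k + r)") auto

declare Mf.simps[simp del]

end

theory Submission
  imports Defs
begin

text \<open>Let \<open>\<psi>\<close> be an \<open>r\<close>-colouring of \<open>[1, M(k;r)]\<close> and \<open>L = M(k;r-1)\<close>. On \<open>[1, M(k-1;r)]\<close>,
\<open>\<psi>\<close> has a monochromatic \<open>(k-1)\<close>-term wave \<open>w\<close>, of colour \<open>c\<close> say, whose last gap \<open>d\<close> is at
most \<open>\<Delta>\<^bsup>M(k-1;r)\<^esup>(k-1;r)\<close>. By the recursion for \<open>M(k;r)\<close>, the block of \<open>L\<close> integers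
starting at \<open>w\<^sub>k\<^sub>-\<^sub>1 + d\<close> still lies in \<open>[1, M(k;r)]\<close>. If the block contains an element of
colour \<open>c\<close>, appending it to \<open>w\<close> gives a monochromatic \<open>k\<close>-term wave with last gap at most
\<open>d + L - 1\<close>. Otherwise the block uses only \<open>r - 1\<close> colours, so it contains a monochromatic
\<open>k\<close>-term wave, whose last gap is less than \<open>L\<close>. The same case distinction shows by
induction that every \<open>r\<close>-colouring of \<open>[1, M(k;r)]\<close> has a monochromatic \<open>k\<close>-term wave.\<close>

definition wave_forcing :: "nat \<Rightarrow> nat \<Rightarrow> nat \<Rightarrow> bool" where
  "wave_forcing r N k \<longleftrightarrow> (\<forall>psi. coloring r N psi \<longrightarrow> (\<exists>w. mono_wave psi N k w))"

lemma coloring_mono: "coloring r N psi \<Longrightarrow> M \<le> N \<Longrightarrow> coloring r M psi"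
  unfolding coloring_def by auto

lemma ascending_wave_shift: "ascending_wave u n \<Longrightarrow> ascending_wave (\<lambda>i. u i + s) n"
  unfolding ascending_wave_def by auto

lemma ascending_wave_extend:
  assumes "ascending_wave w n" "2 \<le> n" "w n < x" "w n - w (n - 1) \<le> x - w n"
  shows "ascending_wave (w(Suc n := x)) (Suc n)"
  using assms unfolding ascending_wave_def
  apply (intro conjI ballI)
  subgoal for i by (cases "i = Suc n") auto
  subgoal for i by (cases "i = n") auto
  subgoal for i by (cases "i = n") auto
  done

lemma mono_wave_mono: "mono_wave psi N k w \<Longrightarrow> N \<le> N' \<Longrightarrow> mono_wave psi N' k w"
  unfolding mono_wave_def by force

lemma mono_wave_range: "mono_wave psi N k w \<Longrightarrow> i \<in> {1..k} \<Longrightarrow> 1 \<le> w i \<and> w i \<le> N"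
  unfolding mono_wave_def ascending_wave_def by blast

lemma mono_wave_last_gap_le: "mono_wave psi N k w \<Longrightarrow> 1 \<le> k \<Longrightarrow> w k - w (k - 1) \<le> N"
proof -
  assume "mono_wave psi N k w" "1 \<le> k"
  then have "w k \<le> N" using mono_wave_range[of psi N k w k] by simp
  then show ?thesis by linarith
qed

lemma mono_wave_extend:
  assumes w: "mono_wave psi N n w" and n: "2 \<le> n"
    and x: "w n + (w n - w (n - 1)) \<le> x" "x \<le> N" "psi x = psi (w 1)"
  shows "mono_wave psi N (Suc n) (w(Suc n := x))"
proof -
  have asc: "ascending_wave w n" using w unfolding mono_wave_def by blast
  have "n - 1 \<in> {1..<n}" using n by auto
  then have "w (n - 1) < w (Suc (n - 1))" using asc unfolding ascending_wave_def by blast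
  moreover have "Suc (n - 1) = n" using n by simp
  ultimately have "w n < x" "w n - w (n - 1) \<le> x - w n" using x(1) by simp_all
  then have asc': "ascending_wave (w(Suc n := x)) (Suc n)"
    using ascending_wave_extend asc n by blast
  have "(w(Suc n := x)) i \<le> N \<and> psi ((w(Suc n := x)) i) = psi ((w(Suc n := x)) 1)"
    if "i \<in> {1..Suc n}" for i
  proof (cases "i = Suc n")
    case True
    then show ?thesis using x(2,3) n by simp
  next
    case False
    then have "i \<in> {1..n}" using that by auto
    then have "w i \<le> N" "psi (w i) = psi (w 1)" using w unfolding mono_wave_def by blast+
    then show ?thesis using n False by simp
  qed
  then show ?thesis using asc' unfolding mono_wave_def by blast
qed

lemma finite_last_gaps: "1 \<le> k \<Longrightarrow> finite {w k - w (k - 1) | w. mono_wave psi M k w}"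
  by (rule finite_subset[of _ "{..M}"]) (auto dest: mono_wave_last_gap_le)

lemma delta_le_last_gap: "mono_wave psi M k w \<Longrightarrow> 1 \<le> k \<Longrightarrow> delta k M psi \<le> w k - w (k - 1)"
  unfolding delta_def by (intro Min_le finite_last_gaps) auto

lemma delta_attained:
  assumes "mono_wave psi M k w" "1 \<le> k"
  obtains v where "mono_wave psi M k v" "v k - v (k - 1) = delta k M psi"
proof -
  have "delta k M psi \<in> {w k - w (k - 1) | w. mono_wave psi M k w}"
    unfolding delta_def using assms by (intro Min_in finite_last_gaps) auto
  then show ?thesis using that by auto
qed

lemma delta_le: "mono_wave psi M k w \<Longrightarrow> 1 \<le> k \<Longrightarrow> delta k M psi \<le> M"
  using delta_le_last_gap mono_wave_last_gap_le le_trans by blast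

lemma finite_deltas:
  assumes "wave_forcing r M k" "1 \<le> k"
  shows "finite {delta k M psi | psi. coloring r M psi}"
proof (rule finite_subset[of _ "{..M}"])
  show "{delta k M psi | psi. coloring r M psi} \<subseteq> {..M}"
    using assms delta_le unfolding wave_forcing_def by fastforce
qed simp

lemma delta_le_Delta:
  "wave_forcing r M k \<Longrightarrow> 1 \<le> k \<Longrightarrow> coloring r M psi \<Longrightarrow> delta k M psi \<le> Delta M k r"
  unfolding Delta_def by (rule Max_ge) (auto intro: finite_deltas)

lemma Delta_le_if_small_last_gaps:
  assumes "1 \<le> k" "1 \<le> r"
    and small: "\<And>psi. coloring r M psi \<Longrightarrow> \<exists>w. mono_wave psi M k w \<and> w k - w (k - 1) \<le> B"
  shows "Delta M k r \<le> B"
proof -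
  have forcing: "wave_forcing r M k"
    unfolding wave_forcing_def using small by blast
  have "coloring r M (\<lambda>_. 0)" using assms(2) unfolding coloring_def by auto
  then have "{delta k M psi | psi. coloring r M psi} \<noteq> {}" by blast
  moreover have "delta k M psi \<le> B" if "coloring r M psi" for psi
    using small[OF that] delta_le_last_gap assms(1) le_trans by blast
  ultimately show ?thesis
    unfolding Delta_def using finite_deltas[OF forcing assms(1)] by (subst Max_le_iff) auto
qed

lemma wave_forcing_pos:
  assumes "wave_forcing r N k" "1 \<le> r" "1 \<le> k"
  shows "1 \<le> N"
proof -
  have "coloring r N (\<lambda>_. 0)" using assms(2) unfolding coloring_def by simp
  then obtain w where "mono_wave (\<lambda>_. 0) N k w" using assms(1) unfolding wave_forcing_def by blast
  from mono_wave_range[OF this, of 1] show ?thesis using assms(3) by auto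
qed

lemma wave_forcing_one_colour: "wave_forcing 1 k k"
proof -
  have "mono_wave psi k k id" if "coloring 1 k psi" for psi
    using that unfolding mono_wave_def ascending_wave_def coloring_def by auto
  then show ?thesis unfolding wave_forcing_def by blast
qed

lemma wave_forcing_one_term: "1 \<le> N \<Longrightarrow> wave_forcing r N 1"
  unfolding wave_forcing_def mono_wave_def ascending_wave_def
  by (intro allI impI exI[of _ "\<lambda>_. 1"]) auto

lemma wave_forcing_two_terms: "wave_forcing r (r + 1) 2"
  unfolding wave_forcing_def
proof (intro allI impI)
  fix psi assume col: "coloring r (r + 1) psi"
  have "\<not> inj_on psi {1..r + 1}"
  proof
    assume inj: "inj_on psi {1..r + 1}"
    have "psi ` {1..r + 1} \<subseteq> {..<r}" using col unfolding coloring_def by auto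
    from card_inj_on_le[OF inj this] show False by simp
  qed
  then obtain a b where "a \<in> {1..r + 1}" "b \<in> {1..r + 1}" "a \<noteq> b" "psi a = psi b"
    unfolding inj_on_def by blast
  then have "mono_wave psi (r + 1) 2 (\<lambda>i. if i \<le> 1 then min a b else max a b)"
    unfolding mono_wave_def ascending_wave_def by (auto simp: min_def max_def)
  then show "\<exists>w. mono_wave psi (r + 1) 2 w" by blast
qed

text \<open>Deleting the colour \<open>c\<close> and renumbering the colours above it turns a block of length
\<open>L\<close> avoiding \<open>c\<close> into an \<open>(r-1)\<close>-colouring of \<open>[1, L]\<close>.\<close>

lemma mono_wave_in_block_avoiding_colour:
  assumes forcing: "wave_forcing (r - 1) L k" and k: "2 \<le> k" and "c < r"
    and block: "\<And>j. s < j \<Longrightarrow> j \<le> s + L \<Longrightarrow> psi j < r \<and> psi j \<noteq> c"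
  shows "\<exists>w. mono_wave psi (s + L) k w \<and> w k - w (k - 1) < L"
proof -
  define g where "g v = (if c < v then v - 1 else v)" for v :: nat
  have g_inj: "v = v'" if "v \<noteq> c" "v' \<noteq> c" "g v = g v'" for v v'
    using that unfolding g_def by (auto split: if_splits)
  have "g (psi (j + s)) < r - 1" if "j \<in> {1..L}" for j
  proof -
    have "psi (j + s) < r" "psi (j + s) \<noteq> c" using block[of "j + s"] that by auto
    then show ?thesis using \<open>c < r\<close> unfolding g_def by auto
  qed
  then have "coloring (r - 1) L (\<lambda>j. g (psi (j + s)))"
    unfolding coloring_def by blast
  then obtain u where u: "mono_wave (\<lambda>j. g (psi (j + s))) L k u"
    using forcing unfolding wave_forcing_def by blast
  note u_range = mono_wave_range[OF u]
  have same_colour: "psi (u i + s) = psi (u 1 + s)" if "i \<in> {1..k}" for i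
  proof (rule g_inj)
    show "psi (u i + s) \<noteq> c" "psi (u 1 + s) \<noteq> c"
      using block u_range[OF that] u_range[of 1] k by auto
    show "g (psi (u i + s)) = g (psi (u 1 + s))"
      using u that unfolding mono_wave_def by blast
  qed
  have "mono_wave psi (s + L) k (\<lambda>i. u i + s)"
    unfolding mono_wave_def
  proof (intro conjI ballI)
    show "ascending_wave (\<lambda>i. u i + s) k"
      using u ascending_wave_shift unfolding mono_wave_def by blast
    fix i assume i: "i \<in> {1..k}"
    show "u i + s \<le> s + L" using u_range[OF i] by simp
    show "psi (u i + s) = psi (u 1 + s)" using same_colour[OF i] .
  qed
  moreover have "(u k + s) - (u (k - 1) + s) < L"
  proof -
    have "k - 1 \<in> {1..k}" "k \<in> {1..k}" using k by auto
    from u_range[OF this(1)] u_range[OF this(2)] show ?thesis by linarith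
  qed
  ultimately show ?thesis by (intro exI[of _ "\<lambda>i. u i + s"] conjI)
qed

lemma mono_wave_after_wave:
  assumes n: "2 \<le> n" and forcing: "wave_forcing (r - 1) L (Suc n)"
    and w: "mono_wave psi M n w" and col: "coloring r M psi"
    and fits: "w n + (w n - w (n - 1)) + L - 1 \<le> M"
  shows "\<exists>v. mono_wave psi M (Suc n) v \<and> v (Suc n) - v n \<le> w n - w (n - 1) + L - 1"
proof -
  define a where "a = w n + (w n - w (n - 1))"
  have "1 \<le> w n" "1 \<le> w 1" "w 1 \<le> M"
    using mono_wave_range[OF w, of n] mono_wave_range[OF w, of 1] n by auto
  then have a_pos: "1 \<le> a" and "w 1 \<in> {1..M}" unfolding a_def by auto
  then have "psi (w 1) < r" using col unfolding coloring_def by blast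
  show ?thesis
  proof (cases "\<exists>x. a \<le> x \<and> x \<le> a + L - 1 \<and> psi x = psi (w 1)")
    case True
    then obtain x where x: "a \<le> x" "x \<le> a + L - 1" "psi x = psi (w 1)" by blast
    have "x \<le> M" using x(2) fits unfolding a_def by linarith
    with x have "mono_wave psi M (Suc n) (w(Suc n := x))"
      using mono_wave_extend[OF w n] unfolding a_def by blast
    moreover have "(w(Suc n := x)) (Suc n) - (w(Suc n := x)) n \<le> w n - w (n - 1) + L - 1"
      using x(2) unfolding a_def by simp
    ultimately show ?thesis by (intro exI[of _ "w(Suc n := x)"] conjI)
  next
    case False
    have block: "psi j < r \<and> psi j \<noteq> psi (w 1)" if "a - 1 < j" "j \<le> a - 1 + L" for j
    proof
      have "j \<in> {1..M}" using that a_pos fits unfolding a_def by auto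
      then show "psi j < r" using col unfolding coloring_def by blast
      show "psi j \<noteq> psi (w 1)" using False that a_pos by auto
    qed
    have "2 \<le> Suc n" using n by simp
    from mono_wave_in_block_avoiding_colour[where s = "a - 1" and psi = psi,
        OF forcing this \<open>psi (w 1) < r\<close> block]
    obtain v where v: "mono_wave psi (a - 1 + L) (Suc n) v" "v (Suc n) - v n < L"
      by auto
    have "a - 1 + L \<le> M" using a_pos fits unfolding a_def by linarith
    then have "mono_wave psi M (Suc n) v" using mono_wave_mono[OF v(1)] by blast
    moreover have "v (Suc n) - v n \<le> w n - w (n - 1) + L - 1" using v(2) by linarith
    ultimately show ?thesis by (intro exI[of _ v] conjI)
  qed
qed

lemma mono_wave_with_small_last_gap:
  assumes k: "3 \<le> k" and r: "2 \<le> r"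
    and forcing_prev: "wave_forcing r M' (k - 1)" and forcing_fewer: "wave_forcing (r - 1) L k"
    and col: "coloring r (M' + Delta M' (k - 1) r + L - 1) psi"
  shows "\<exists>w. mono_wave psi (M' + Delta M' (k - 1) r + L - 1) k w
           \<and> w k - w (k - 1) \<le> Delta M' (k - 1) r + L - 1"
proof -
  obtain n where k_eq: "k = Suc n" and n: "2 \<le> n" using k by (cases k) auto
  define D where "D = Delta M' n r"
  define M where "M = M' + D + L - 1"
  have L: "1 \<le> L" using wave_forcing_pos[OF forcing_fewer] k r by simp
  have colM: "coloring r M psi" using col unfolding M_def D_def k_eq by simp
  have col': "coloring r M' psi" by (rule coloring_mono[OF colM]) (use L in \<open>simp add: M_def\<close>)
  have forcing_n: "wave_forcing r M' n" using forcing_prev unfolding k_eq by simp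
  then obtain w0 where w0: "mono_wave psi M' n w0"
    using col' unfolding wave_forcing_def by blast
  have "1 \<le> n" using n by simp
  then obtain w where w: "mono_wave psi M' n w"
    and gap: "w n - w (n - 1) = delta n M' psi"
    using delta_attained[OF w0] by blast
  have "w n - w (n - 1) \<le> D"
    using delta_le_Delta[OF forcing_n \<open>1 \<le> n\<close> col'] gap unfolding D_def by linarith
  moreover have "w n \<le> M'" using mono_wave_range[OF w, of n] n by simp
  ultimately have fits: "w n + (w n - w (n - 1)) + L - 1 \<le> M" and "M' \<le> M"
    using L unfolding M_def by linarith+
  from mono_wave_after_wave[OF n forcing_fewer[unfolded k_eq] mono_wave_mono[OF w \<open>M' \<le> M\<close>]
      colM fits]
  obtain v where "mono_wave psi M (Suc n) v" "v (Suc n) - v n \<le> w n - w (n - 1) + L - 1"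
    by blast
  with \<open>w n - w (n - 1) \<le> D\<close> show ?thesis
    unfolding k_eq M_def D_def by (intro exI[of _ v] conjI) simp_all
qed

lemma Mf_rec:
  "3 \<le> k \<Longrightarrow> 2 \<le> r \<Longrightarrow>
     Mf k r = Mf (k - 1) r + Delta (Mf (k - 1) r) (k - 1) r + Mf k (r - 1) - 1"
  by (subst Mf.simps) simp

lemma wave_forcing_Mf: "1 \<le> k \<Longrightarrow> 1 \<le> r \<Longrightarrow> wave_forcing r (Mf k r) k"
proof (induction k r rule: Mf.induct)
  case (1 k r)
  consider "r = 1" | "2 \<le> r" "k = 1" | "2 \<le> r" "k = 2" | "2 \<le> r" "3 \<le> k"
    using "1.prems" by linarith
  then show ?case
  proof cases
    case 1
    then show ?thesis using wave_forcing_one_colour by (simp add: Mf.simps)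
  next
    case 2
    then show ?thesis using wave_forcing_one_term by (simp add: Mf.simps)
  next
    case 3
    then show ?thesis using wave_forcing_two_terms by (simp add: Mf.simps)
  next
    case 4
    then have "wave_forcing r (Mf (k - 1) r) (k - 1)" "wave_forcing (r - 1) (Mf k (r - 1)) k"
      using "1.IH" by simp_all
    then show ?thesis
      using mono_wave_with_small_last_gap 4 unfolding Mf_rec[OF 4(2,1)] wave_forcing_def
      by blast
  qed
qed

theorem corollary1p2:
  fixes k r :: nat
  assumes "k \<ge> 3" and "r \<ge> 2"
  shows "Delta (Mf k r) k r \<le> Delta (Mf (k - 1) r) (k - 1) r + Mf k (r - 1) - 1"
proof (rule Delta_le_if_small_last_gaps)
  show "1 \<le> k" "1 \<le> r" using assms by simp_all
  have "wave_forcing r (Mf (k - 1) r) (k - 1)" "wave_forcing (r - 1) (Mf k (r - 1)) k"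
    using wave_forcing_Mf assms by simp_all
  from mono_wave_with_small_last_gap[OF assms this]
  show "\<exists>w. mono_wave psi (Mf k r) k w
          \<and> w k - w (k - 1) \<le> Delta (Mf (k - 1) r) (k - 1) r + Mf k (r - 1) - 1"
    if "coloring r (Mf k r) psi" for psi
    using that unfolding Mf_rec[OF assms] .
qed

end
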